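(* Let $0<c_2<0.5$ and let $c_1$ be a real number. There is no set $A\subseteq\mathbb{N}$ such that $$\sum_{n=0}^N R_A(n)=c_2N^2+c_1N+o(\sqrt{N})\quad (N\to\infty).$$
   Context: $\mathbb{N}$ denotes the set of non-negative integers. For $A\subseteq\mathbb{N}$, $R_A(n)$ denotes the number of ordered pairs $(a,a')$ with $a,a'\in A$ and $a+a'=n$. *)

theory Defs
  imports "HOL-Analysis.Analysis" "HOL-Library.Landau_Symbols"
begin

definition rep_count :: "nat set \<Rightarrow> nat \<Rightarrow> nat" where
  "rep_count A n = card {(a, a'). a \<in> A \<and> a' \<in> A \<and> a + a' = n}"

end

theory Submission
  imports Defs
begin

(* Write f(z) = \<Sum>a\<in>A. z^a and e(N) for the error term, so that the partial sums of R_A are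
   c2 N^2 + c1 N + e(N). Since f(z)^2 = \<Sum>n. R_A(n) z^n, comparing R_A with the representation
   function n + 1 of A = \<nat> gives
     f(z)^2 = 2 c2 (\<Sum>n. z^n)^2 + O(|\<Sum>n. z^n|) + (1 - z) \<Sum>n. e(n) z^n.
   At a real point \<rho> = 1 - u this yields (u f(\<rho>))^2 \<ge> 2 c2 - O(u). On the circle |z| = sqrt \<rho>
   Parseval gives that the mean of |f|^2 is f(\<rho>), and e(n) = o(sqrt n) makes the mean of
   |(1 - z) \<Sum>n. e(n) z^n| small compared to 1/u; hence u f(\<rho>) \<le> 2 c2 + o(1).
   Together these force 2 c2 \<le> (2 c2)^2, which is impossible for 0 < 2 c2 < 1.
   All power series are truncated at degree M, Parseval is replaced by its discrete version over
   the M-th roots of unity, and M tends to infinity for fixed \<rho>. *)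

lemma cis_power_power: "(cis x ^ j) ^ n = cis (real (j * n) * x)"
  by (metis Complex.DeMoivre power_mult)

lemma cis_two_pi_div_ne_1:
  fixes d :: real and M :: nat
  assumes "d \<noteq> 0" "\<bar>d\<bar> < M"
  shows "cis (2 * pi * d / M) \<noteq> 1"
proof
  have "real M > 0"
    using assms by linarith
  assume "cis (2 * pi * d / M) = 1"
  then have "cos (2 * pi * d / M) = 1"
    by (simp add: complex_eq_iff)
  then obtain k :: int where "2 * pi * d / M = k * 2 * pi"
    by (auto simp: cos_one_2pi_int)
  then have "d = k * M"
    using \<open>real M > 0\<close> by (simp add: field_simps)
  with assms have "k \<noteq> 0" "\<bar>real_of_int k\<bar> < 1"
    by (auto simp: abs_mult)
  then show False
    by linarith
qed

lemma sum_roots_of_unity_orthogonal: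
  assumes "M \<ge> 1" "n < M" "m < M"
  shows "(\<Sum>j<M. (cis (2*pi/M) ^ j)^n * cnj ((cis (2*pi/M) ^ j)^m)) = (if n = m then of_nat M else 0)"
proof -
  define d where "d = real n - real m"
  define w where "w = cis (2*pi*d/M)"
  have "(cis (2*pi/M) ^ j)^n * cnj ((cis (2*pi/M) ^ j)^m) = w^j" for j
  proof -
    have "(cis (2*pi/M) ^ j)^n * cnj ((cis (2*pi/M) ^ j)^m)
        = cis (real (j*n) * (2*pi/M)) * cnj (cis (real (j*m) * (2*pi/M)))"
      by (simp only: cis_power_power)
    also have "\<dots> = cis (real (j*n) * (2*pi/M) - real (j*m) * (2*pi/M))"
      by (simp add: cis_cnj cis_mult)
    also have "real (j*n) * (2*pi/M) - real (j*m) * (2*pi/M) = real j * (2*pi*d/M)"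
      by (simp add: d_def algebra_simps diff_divide_distrib)
    also have "cis (real j * (2*pi*d/M)) = w^j"
      unfolding w_def by (rule Complex.DeMoivre [symmetric])
    finally show ?thesis .
  qed
  then have sum_eq: "(\<Sum>j<M. (cis (2*pi/M) ^ j)^n * cnj ((cis (2*pi/M) ^ j)^m)) = (\<Sum>j<M. w^j)"
    by simp
  show ?thesis
  proof (cases "n = m")
    case True
    then have "w = 1" by (simp add: w_def d_def)
    with True show ?thesis unfolding sum_eq by simp
  next
    case False
    have "d \<in> \<int>"
      unfolding d_def by (metis Ints_diff Ints_of_nat)
    have "w^M = cis (2*pi*d)"
      using assms(1) by (simp add: w_def Complex.DeMoivre)
    also have "\<dots> = 1"
      using \<open>d \<in> \<int>\<close> by (rule cis_multiple_2pi)
    finally have "w^M = 1" .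
    moreover have "w \<noteq> 1"
      unfolding w_def using assms(2,3) False by (intro cis_two_pi_div_ne_1) (auto simp: d_def)
    ultimately show ?thesis
      using False unfolding sum_eq by (simp add: sum_gp_strict)
  qed
qed

lemma discrete_parseval:
  fixes b :: "nat \<Rightarrow> complex"
  assumes "M \<ge> 1"
  shows "(\<Sum>j<M. (norm (\<Sum>n<M. b n * (cis (2*pi/M) ^ j)^n))^2) = M * (\<Sum>n<M. (norm (b n))^2)"
proof -
  let ?u = "\<lambda>j. cis (2*pi/M) ^ j"
  have "complex_of_real (\<Sum>j<M. (norm (\<Sum>n<M. b n * ?u j^n))^2)
      = (\<Sum>j<M. (\<Sum>n<M. b n * ?u j^n) * cnj (\<Sum>m<M. b m * ?u j^m))"
    by (simp only: of_real_sum complex_norm_square)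
  also have "\<dots> = (\<Sum>j<M. \<Sum>n<M. \<Sum>m<M. b n * cnj (b m) * (?u j^n * cnj (?u j^m)))"
    by (simp only: cnj_sum sum_product complex_cnj_mult mult_ac)
  also have "\<dots> = (\<Sum>n<M. \<Sum>m<M. \<Sum>j<M. b n * cnj (b m) * (?u j^n * cnj (?u j^m)))"
    by (subst sum.swap) (rule sum.cong[OF refl], rule sum.swap)
  also have "\<dots> = (\<Sum>n<M. \<Sum>m<M. b n * cnj (b m) * (\<Sum>j<M. ?u j^n * cnj (?u j^m)))"
    by (simp only: sum_distrib_left)
  also have "\<dots> = (\<Sum>n<M. \<Sum>m<M. b n * cnj (b m) * (if n = m then of_nat M else 0))"
    by (intro sum.cong refl) (subst sum_roots_of_unity_orthogonal[OF assms], auto)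
  also have "\<dots> = complex_of_real (M * (\<Sum>n<M. (norm (b n))^2))"
    by (simp add: if_distrib[of "\<lambda>x. _ * x"] sum_distrib_left mult_ac
        flip: complex_norm_square cong: if_cong)
  finally show ?thesis
    using of_real_eq_iff by blast
qed

lemma discrete_parseval_circle:
  fixes c :: "nat \<Rightarrow> real"
  assumes "M \<ge> 1" "r \<ge> 0"
  shows "(\<Sum>j<M. (norm (\<Sum>n<M. of_real (c n) * (of_real r * cis (2*pi/M) ^ j)^n))^2)
           = M * (\<Sum>n<M. (c n)^2 * (r^2)^n)"
proof -
  have "(\<Sum>j<M. (norm (\<Sum>n<M. of_real (c n) * (of_real r * cis (2*pi/M) ^ j)^n))^2)
      = (\<Sum>j<M. (norm (\<Sum>n<M. complex_of_real (c n * r^n) * (cis (2*pi/M) ^ j)^n))^2)"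
    by (simp add: power_mult_distrib mult_ac)
  also have "\<dots> = M * (\<Sum>n<M. (norm (complex_of_real (c n * r^n)))^2)"
    by (rule discrete_parseval[OF assms(1)])
  also have "\<dots> = M * (\<Sum>n<M. (c n)^2 * (r^2)^n)"
    using assms(2) by (simp add: norm_mult norm_power power_mult_distrib mult.commute flip: power_mult)
  finally show ?thesis .
qed

lemma sum_norm_poly_on_circle_le:
  fixes c :: "nat \<Rightarrow> real"
  assumes "M \<ge> 1" "r \<ge> 0"
  shows "(\<Sum>j<M. norm (\<Sum>n<M. of_real (c n) * (of_real r * cis (2*pi/M) ^ j)^n))
           \<le> M * sqrt (\<Sum>n<M. (c n)^2 * (r^2)^n)"
proof -
  let ?x = "\<lambda>j. norm (\<Sum>n<M. of_real (c n) * (of_real r * cis (2*pi/M) ^ j)^n)"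
  have "(\<Sum>j<M. ?x j)^2 \<le> (\<Sum>j<M. (?x j)^2) * M"
    using Cauchy_Schwarz_ineq_sum[of ?x "\<lambda>_. 1" "{..<M}"] by simp
  also have "\<dots> = real M * real M * (\<Sum>n<M. (c n)^2 * (r^2)^n)"
    unfolding discrete_parseval_circle[OF assms] by (simp only: mult_ac)
  finally have "(\<Sum>j<M. ?x j) \<le> sqrt (real M * real M * (\<Sum>n<M. (c n)^2 * (r^2)^n))"
    by (rule real_le_rsqrt)
  then show ?thesis
    by (simp add: real_sqrt_mult)
qed

definition overflow_pairs :: "nat \<Rightarrow> (nat \<times> nat) set" where
  "overflow_pairs M = {p \<in> {..<M} \<times> {..<M}. M \<le> fst p + snd p}"

lemma finite_overflow_pairs: "finite (overflow_pairs M)"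
  by (rule finite_subset[of _ "{..<M} \<times> {..<M}"]) (auto simp: overflow_pairs_def)

lemma card_overflow_pairs_le: "card (overflow_pairs M) \<le> M^2"
proof -
  have "card (overflow_pairs M) \<le> card ({..<M} \<times> {..<M})"
    by (rule card_mono) (auto simp: overflow_pairs_def)
  then show ?thesis by (simp add: card_cartesian_product power2_eq_square)
qed

lemma square_sum_powers_eq:
  fixes w :: "nat \<Rightarrow> 'a::comm_semiring_1"
  shows "(\<Sum>i<M. w i * z^i)^2 = (\<Sum>n<M. (\<Sum>i\<le>n. w i * w (n - i)) * z^n)
          + (\<Sum>p\<in>overflow_pairs M. w (fst p) * w (snd p) * z^(fst p + snd p))"
proof -
  let ?g = "\<lambda>p. w (fst p) * w (snd p) * z^(fst p + snd p)"
  let ?S = "{..<M} \<times> {..<M}"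
  let ?low = "{p. fst p + snd p < M}"
  have "(\<Sum>i<M. w i * z^i)^2 = sum ?g ?S"
    by (simp add: power2_eq_square sum_product power_add mult_ac sum.cartesian_product case_prod_beta)
  also have "\<dots> = sum ?g (?S \<inter> ?low) + sum ?g (?S - ?low)"
    by (simp add: sum.Int_Diff)
  also have "?S - ?low = overflow_pairs M"
    by (auto simp: overflow_pairs_def)
  also have "sum ?g (?S \<inter> ?low) = (\<Sum>q\<in>(SIGMA n:{..<M}. {..n}). w (snd q) * w (fst q - snd q) * z^(fst q))"
    by (rule sum.reindex_bij_witness[where i="\<lambda>q. (snd q, fst q - snd q)" and j="\<lambda>p. (fst p + snd p, fst p)"])
      auto
  also have "\<dots> = (\<Sum>n<M. (\<Sum>i\<le>n. w i * w (n - i)) * z^n)"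
    by (simp add: sum.Sigma case_prod_beta sum_distrib_right)
  finally show ?thesis .
qed

lemma norm_sum_overflow_pairs_le:
  fixes z :: "'a::real_normed_field" and w :: "nat \<Rightarrow> 'a"
  assumes "norm z \<le> 1" and "\<And>n. norm (w n) \<le> 1"
  shows "norm (\<Sum>p\<in>overflow_pairs M. w (fst p) * w (snd p) * z^(fst p + snd p)) \<le> real M^2 * norm z ^ M"
proof -
  have "norm (\<Sum>p\<in>overflow_pairs M. w (fst p) * w (snd p) * z^(fst p + snd p))
       \<le> (\<Sum>p\<in>overflow_pairs M. norm z ^ M)"
  proof (rule sum_norm_le)
    fix p assume p: "p \<in> overflow_pairs M"
    have "norm (w (fst p) * w (snd p) * z^(fst p + snd p)) \<le> 1 * 1 * norm z ^ (fst p + snd p)"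
      unfolding norm_mult norm_power
      using assms(2) by (intro mult_mono) auto
    also have "\<dots> \<le> norm z ^ M"
      using p assms(1) by (auto simp: overflow_pairs_def intro: power_decreasing)
    finally show "norm (w (fst p) * w (snd p) * z^(fst p + snd p)) \<le> norm z ^ M" .
  qed
  also have "\<dots> \<le> real M^2 * norm z ^ M"
    using card_overflow_pairs_le[of M] by (simp add: mult_right_mono flip: of_nat_le_iff)
  finally show ?thesis .
qed

lemma of_nat_rep_count:
  "of_nat (rep_count A n) = (\<Sum>i\<le>n. indicator A i * indicator A (n - i) :: 'a::comm_semiring_1)"
proof -
  have "{(a, a'). a \<in> A \<and> a' \<in> A \<and> a + a' = n} = (\<lambda>i. (i, n - i)) ` {i\<in>{..n}. i \<in> A \<and> n - i \<in> A}"
    by (auto simp: image_iff)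
  then have "rep_count A n = card {i\<in>{..n}. i \<in> A \<and> n - i \<in> A}"
    unfolding rep_count_def by (simp add: card_image inj_on_def)
  also have "of_nat \<dots> = (\<Sum>i\<le>n. if i \<in> A \<and> n - i \<in> A then 1 else (0::'a))"
    by (simp add: sum.inter_filter[symmetric])
  also have "\<dots> = (\<Sum>i\<le>n. indicator A i * indicator A (n - i))"
    by (rule sum.cong) (auto simp: indicator_def)
  finally show ?thesis .
qed

lemma summation_by_parts_powers:
  fixes f :: "nat \<Rightarrow> 'a::comm_ring_1"
  assumes "M \<ge> 1"
  shows "(\<Sum>n<M. (f n - (if n = 0 then 0 else f (n - 1))) * z^n)
           = (1 - z) * (\<Sum>n<M. f n * z^n) + f (M - 1) * z^M"
  using assms
proof (induction M)
  case 0
  then show ?case by simp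
next
  case (Suc M)
  then show ?case
    by (cases M) (simp_all add: algebra_simps)
qed

definition counting_error :: "nat set \<Rightarrow> real \<Rightarrow> real \<Rightarrow> nat \<Rightarrow> real" where
  "counting_error A c1 c2 N = real (\<Sum>n\<le>N. rep_count A n) - (c2 * real N ^ 2 + c1 * real N)"

(* R_A is compared with R_\<nat>(n) = n + 1, the coefficient sequence of (\<Sum>n. z^n)^2. *)

lemma rep_count_eq_counting_error_diff:
  fixes A :: "nat set" and c1 c2 :: real
  defines "e \<equiv> counting_error A c1 c2"
  shows "real (rep_count A n) = 2 * c2 * real (n + 1) + (c1 - 3 * c2) - (if n = 0 then c1 - c2 else 0)
           + (e n - (if n = 0 then 0 else e (n - 1)))"
proof (cases n)
  case 0
  then show ?thesis by (simp add: e_def counting_error_def)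
next
  case (Suc k)
  have "(\<Sum>i\<le>Suc k. rep_count A i) = (\<Sum>i\<le>k. rep_count A i) + rep_count A (Suc k)"
    by simp
  then show ?thesis
    using Suc by (simp add: e_def counting_error_def algebra_simps power2_eq_square)
qed

lemma indicator_poly_square_eq:
  fixes z :: complex and A :: "nat set" and c1 c2 :: real
  assumes "M \<ge> 1"
  defines "e \<equiv> counting_error A c1 c2"
  shows "(\<Sum>n<M. indicator A n * z^n)^2 - 2 * c2 * (\<Sum>n<M. z^n)^2
           = (c1 - 3 * c2) * (\<Sum>n<M. z^n) - (c1 - c2)
             + (1 - z) * (\<Sum>n<M. e n * z^n) + e (M - 1) * z^M
             + (\<Sum>p\<in>overflow_pairs M. indicator A (fst p) * indicator A (snd p) * z^(fst p + snd p))
             - 2 * c2 * (\<Sum>p\<in>overflow_pairs M. z^(fst p + snd p))"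
proof -
  let ?Q = "\<Sum>n<M. z^n"
  have rep_count_series: "(\<Sum>n<M. of_nat (rep_count A n) * z^n)
      = 2 * c2 * (\<Sum>n<M. of_nat (n + 1) * z^n) + (c1 - 3 * c2) * ?Q - (c1 - c2)
        + ((1 - z) * (\<Sum>n<M. e n * z^n) + e (M - 1) * z^M)"
  proof -
    have "(\<Sum>n<M. of_nat (rep_count A n) * z^n)
        = (\<Sum>n<M. 2 * c2 * (of_nat (n + 1) * z^n) + (c1 - 3 * c2) * z^n
             - (if n = 0 then complex_of_real (c1 - c2) else 0)
             + (of_real (e n) - (if n = 0 then 0 else of_real (e (n - 1)))) * z^n)"
      by (intro sum.cong refl, subst of_real_of_nat_eq [symmetric],
          subst rep_count_eq_counting_error_diff [of A _ c2 c1]) (simp add: e_def algebra_simps)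
    also have "\<dots> = 2 * c2 * (\<Sum>n<M. of_nat (n + 1) * z^n) + (c1 - 3 * c2) * ?Q - (c1 - c2)
        + (\<Sum>n<M. (of_real (e n) - (if n = 0 then 0 else of_real (e (n - 1)))) * z^n)"
      using assms(1) by (simp add: sum.distrib sum_subtractf sum_distrib_left)
    also have "(\<Sum>n<M. (of_real (e n) - (if n = 0 then 0 else of_real (e (n - 1)))) * z^n)
        = (1 - z) * (\<Sum>n<M. e n * z^n) + e (M - 1) * z^M"
      using summation_by_parts_powers[OF assms(1), of "\<lambda>n. complex_of_real (e n)" z] by simp
    finally show ?thesis .
  qed
  have square_indicator_poly: "(\<Sum>n<M. indicator A n * z^n)^2
      = (\<Sum>n<M. of_nat (rep_count A n) * z^n)
        + (\<Sum>p\<in>overflow_pairs M. indicator A (fst p) * indicator A (snd p) * z^(fst p + snd p))"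
    by (simp only: square_sum_powers_eq of_nat_rep_count)
  have square_geometric_poly: "?Q^2 = (\<Sum>n<M. of_nat (n + 1) * z^n) + (\<Sum>p\<in>overflow_pairs M. z^(fst p + snd p))"
    using square_sum_powers_eq[where w = "\<lambda>_. 1 :: complex" and z = z] by simp
  show ?thesis
    unfolding square_indicator_poly square_geometric_poly rep_count_series by algebra
qed


lemma norm_indicator_poly_square_sub_le:
  fixes z :: complex and A :: "nat set" and c1 c2 :: real
  assumes "M \<ge> 1" and "norm z \<le> 1"
  defines "e \<equiv> counting_error A c1 c2"
  shows "norm ((\<Sum>n<M. indicator A n * z^n)^2 - 2 * c2 * (\<Sum>n<M. z^n)^2)
           \<le> \<bar>c1 - 3 * c2\<bar> * norm (\<Sum>n<M. z^n) + \<bar>c1 - c2\<bar> + norm (1 - z) * norm (\<Sum>n<M. e n * z^n)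
             + (\<bar>e (M - 1)\<bar> + (1 + 2 * \<bar>c2\<bar>) * real M^2) * norm z ^ M"
proof -
  let ?T = "\<Sum>p\<in>overflow_pairs M. indicator A (fst p) * indicator A (snd p) * z^(fst p + snd p)"
  let ?T1 = "\<Sum>p\<in>overflow_pairs M. z^(fst p + snd p)"
  have T: "norm ?T \<le> real M^2 * norm z ^ M"
    using norm_sum_overflow_pairs_le[OF assms(2), of "indicator A"] by (simp add: indicator_def)
  have "norm ?T1 \<le> real M^2 * norm z ^ M"
    using norm_sum_overflow_pairs_le[OF assms(2), of "\<lambda>_. 1"] by simp
  then have T1: "norm (complex_of_real (2 * c2) * ?T1) \<le> 2 * \<bar>c2\<bar> * (real M^2 * norm z ^ M)"
    by (simp add: norm_mult abs_mult mult_left_mono)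
  have "norm ((\<Sum>n<M. indicator A n * z^n)^2 - 2 * c2 * (\<Sum>n<M. z^n)^2)
      \<le> norm (complex_of_real (c1 - 3 * c2) * (\<Sum>n<M. z^n)) + norm (complex_of_real (c1 - c2))
        + norm ((1 - z) * (\<Sum>n<M. e n * z^n)) + norm (complex_of_real (e (M - 1)) * z^M)
        + norm ?T + norm (complex_of_real (2 * c2) * ?T1)"
    unfolding indicator_poly_square_eq[OF assms(1), of A z c2 c1, folded e_def]
    by (intro norm_triangle_le_diff norm_triangle_le add_right_mono order_refl)
  also have "\<dots> \<le> \<bar>c1 - 3 * c2\<bar> * norm (\<Sum>n<M. z^n) + \<bar>c1 - c2\<bar> + norm (1 - z) * norm (\<Sum>n<M. e n * z^n)
        + \<bar>e (M - 1)\<bar> * norm z ^ M + real M^2 * norm z ^ M + 2 * \<bar>c2\<bar> * (real M^2 * norm z ^ M)"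
    using T T1 unfolding norm_mult norm_power norm_of_real by linarith
  finally show ?thesis
    by (simp add: algebra_simps)
qed

lemma norm_indicator_poly_square_le:
  fixes z :: complex and A :: "nat set" and c1 c2 :: real
  assumes "M \<ge> 1" and "norm z \<le> 1" and "c2 \<ge> 0"
  defines "e \<equiv> counting_error A c1 c2"
  shows "(norm (\<Sum>n<M. indicator A n * z^n))^2
           \<le> 2 * c2 * (norm (\<Sum>n<M. z^n))^2 + \<bar>c1 - 3 * c2\<bar> * norm (\<Sum>n<M. z^n) + \<bar>c1 - c2\<bar>
             + 2 * norm (\<Sum>n<M. e n * z^n) + (\<bar>e (M - 1)\<bar> + (1 + 2 * c2) * real M^2) * norm z ^ M"
proof -
  let ?P = "\<Sum>n<M. indicator A n * z^n" and ?Q = "\<Sum>n<M. z^n"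
  have "(norm ?P)^2 - 2 * c2 * (norm ?Q)^2 = norm (?P^2) - norm (2 * c2 * ?Q^2)"
    using assms(3) by (simp add: norm_mult norm_power)
  also have "\<dots> \<le> norm (?P^2 - 2 * c2 * ?Q^2)"
    by (rule norm_triangle_ineq2)
  also have "\<dots> \<le> \<bar>c1 - 3 * c2\<bar> * norm ?Q + \<bar>c1 - c2\<bar> + norm (1 - z) * norm (\<Sum>n<M. e n * z^n)
      + (\<bar>e (M - 1)\<bar> + (1 + 2 * c2) * real M^2) * norm z ^ M"
    using norm_indicator_poly_square_sub_le[OF assms(1,2), of A c2 c1] assms(3) by (simp add: e_def)
  also have "norm (1 - z) * norm (\<Sum>n<M. e n * z^n) \<le> 2 * norm (\<Sum>n<M. e n * z^n)"
    using norm_triangle_ineq4[of 1 z] assms(2) by (intro mult_right_mono) simp_all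
  finally show ?thesis
    by simp
qed

(* Averaging over the M-th roots of unity on the circle of radius r turns |P|^2 into
   \<Sum>n\<in>A. r^(2n) (discrete Parseval); the error term is controlled by Cauchy-Schwarz. *)

lemma indicator_poly_upper_bound:
  fixes A :: "nat set" and c1 c2 r :: real
  assumes M: "M \<ge> 1" and r: "0 \<le> r" "r \<le> 1" and c2: "c2 \<ge> 0"
  defines "e \<equiv> counting_error A c1 c2"
  shows "(\<Sum>n<M. indicator A n * (r^2)^n)
           \<le> 2 * c2 * (\<Sum>n<M. (r^2)^n) + \<bar>c1 - 3 * c2\<bar> * sqrt (\<Sum>n<M. (r^2)^n) + \<bar>c1 - c2\<bar>
             + 2 * sqrt (\<Sum>n<M. (e n)^2 * (r^2)^n) + (\<bar>e (M - 1)\<bar> + (1 + 2 * c2) * real M^2) * r^M"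
proof -
  define z where "z j = complex_of_real r * cis (2*pi/M) ^ j" for j
  define P where "P j = norm (\<Sum>n<M. of_real (indicator A n) * z j^n)" for j
  define Q where "Q j = norm (\<Sum>n<M. z j^n)" for j
  define E where "E j = norm (\<Sum>n<M. of_real (e n) * z j^n)" for j
  define B where "B = (\<bar>e (M - 1)\<bar> + (1 + 2 * c2) * real M^2) * r^M"
  have "norm (z j) = r" for j
    using r(1) by (simp add: z_def norm_mult norm_power)
  then have pointwise: "P j^2 \<le> 2 * c2 * Q j^2 + \<bar>c1 - 3 * c2\<bar> * Q j + \<bar>c1 - c2\<bar> + 2 * E j + B" for j
    using norm_indicator_poly_square_le[OF M _ c2, of "z j" A c1] r(2)
    by (simp add: P_def Q_def E_def B_def e_def of_real_indicator)
  have Q2: "(\<Sum>j<M. Q j^2) = M * (\<Sum>n<M. (r^2)^n)"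
    unfolding Q_def z_def using discrete_parseval_circle[OF M r(1), of "\<lambda>_. 1"] by simp
  have Q1: "(\<Sum>j<M. Q j) \<le> M * sqrt (\<Sum>n<M. (r^2)^n)"
    unfolding Q_def z_def using sum_norm_poly_on_circle_le[OF M r(1), of "\<lambda>_. 1"] by simp
  have E1: "(\<Sum>j<M. E j) \<le> M * sqrt (\<Sum>n<M. (e n)^2 * (r^2)^n)"
    unfolding E_def z_def by (rule sum_norm_poly_on_circle_le[OF M r(1)])
  have "(indicator A n :: real)^2 = indicator A n" for n
    by (simp add: indicator_def)
  then have "M * (\<Sum>n<M. indicator A n * (r^2)^n) = M * (\<Sum>n<M. (indicator A n)^2 * (r^2)^n)"
    by simp
  also have "\<dots> = (\<Sum>j<M. P j^2)"
    unfolding P_def z_def by (rule discrete_parseval_circle[OF M r(1), symmetric])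
  also have "\<dots> \<le> (\<Sum>j<M. 2 * c2 * Q j^2 + \<bar>c1 - 3 * c2\<bar> * Q j + \<bar>c1 - c2\<bar> + 2 * E j + B)"
    by (intro sum_mono pointwise)
  also have "\<dots> = 2 * c2 * (\<Sum>j<M. Q j^2) + \<bar>c1 - 3 * c2\<bar> * (\<Sum>j<M. Q j) + M * \<bar>c1 - c2\<bar>
      + 2 * (\<Sum>j<M. E j) + M * B"
    by (simp add: sum.distrib sum_distrib_left)
  also have "\<dots> \<le> M * (2 * c2 * (\<Sum>n<M. (r^2)^n) + \<bar>c1 - 3 * c2\<bar> * sqrt (\<Sum>n<M. (r^2)^n)
      + \<bar>c1 - c2\<bar> + 2 * sqrt (\<Sum>n<M. (e n)^2 * (r^2)^n) + B)"
    unfolding Q2 using mult_left_mono[OF Q1, of "\<bar>c1 - 3 * c2\<bar>"] mult_left_mono[OF E1, of 2]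
    by (simp add: algebra_simps)
  finally show ?thesis
    unfolding B_def by (rule mult_left_le_imp_le) (use M in simp)
qed

lemma indicator_poly_lower_bound:
  fixes A :: "nat set" and c1 c2 \<rho> :: real
  assumes M: "M \<ge> 1" and \<rho>: "0 \<le> \<rho>" "\<rho> \<le> 1" and c2: "c2 \<ge> 0"
  defines "e \<equiv> counting_error A c1 c2"
  shows "2 * c2 * (\<Sum>n<M. \<rho>^n)^2 - \<bar>c1 - 3 * c2\<bar> * (\<Sum>n<M. \<rho>^n) - \<bar>c1 - c2\<bar>
           - (1 - \<rho>) * (\<Sum>n<M. \<bar>e n\<bar> * \<rho>^n) - (\<bar>e (M - 1)\<bar> + (1 + 2 * c2) * real M^2) * \<rho>^M
         \<le> (\<Sum>n<M. indicator A n * \<rho>^n)^2"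
proof -
  define X where "X = (\<Sum>n<M. indicator A n * \<rho>^n)"
  define q where "q = (\<Sum>n<M. \<rho>^n)"
  let ?z = "complex_of_real \<rho>"
  have "q \<ge> 0"
    unfolding q_def using \<rho>(1) by (intro sum_nonneg) simp
  have "(\<Sum>n<M. indicator A n * ?z^n)^2 - 2 * c2 * (\<Sum>n<M. ?z^n)^2 = of_real (X^2 - 2 * c2 * q^2)"
    by (simp add: X_def q_def of_real_indicator)
  then have P: "norm ((\<Sum>n<M. indicator A n * ?z^n)^2 - 2 * c2 * (\<Sum>n<M. ?z^n)^2) = \<bar>X^2 - 2 * c2 * q^2\<bar>"
    by (simp only: norm_of_real)
  have Q: "norm (\<Sum>n<M. ?z^n) = q"
    using \<open>q \<ge> 0\<close> by (simp add: q_def flip: of_real_sum of_real_power)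
  have z: "norm ?z ^ M = \<rho>^M"
    using \<rho>(1) by simp
  have "\<bar>X^2 - 2 * c2 * q^2\<bar> \<le> \<bar>c1 - 3 * c2\<bar> * q + \<bar>c1 - c2\<bar>
      + norm (1 - ?z) * norm (\<Sum>n<M. of_real (e n) * ?z^n) + (\<bar>e (M - 1)\<bar> + (1 + 2 * c2) * real M^2) * \<rho>^M"
    using norm_indicator_poly_square_sub_le[OF M, of ?z A c2 c1] \<rho>
    unfolding P Q z e_def[symmetric] abs_of_nonneg[OF c2] by simp
  moreover have "norm (1 - ?z) = 1 - \<rho>"
    using \<rho>(2) by (metis abs_of_nonneg diff_ge_0_iff_ge norm_of_real of_real_1 of_real_diff)
  moreover have "norm (\<Sum>n<M. of_real (e n) * ?z^n) \<le> (\<Sum>n<M. \<bar>e n\<bar> * \<rho>^n)"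
    using norm_sum[of "\<lambda>n. of_real (e n) * ?z^n" "{..<M}"] \<rho>(1)
    by (simp add: norm_mult norm_power)
  ultimately have "\<bar>X^2 - 2 * c2 * q^2\<bar> \<le> \<bar>c1 - 3 * c2\<bar> * q + \<bar>c1 - c2\<bar>
      + (1 - \<rho>) * (\<Sum>n<M. \<bar>e n\<bar> * \<rho>^n) + (\<bar>e (M - 1)\<bar> + (1 + 2 * c2) * real M^2) * \<rho>^M"
    using \<rho>(2) by (smt (verit) mult_left_mono)
  then show ?thesis
    unfolding X_def q_def by linarith
qed

lemma one_minus_mult_sum_power_le:
  fixes \<rho> :: real
  assumes "0 \<le> \<rho>" "\<rho> < 1"
  shows "(1 - \<rho>) * (\<Sum>n<M. \<rho>^n) \<le> 1"
  using assms by (simp add: sum_gp_strict)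

lemma one_minus_mult_sum_n_power_le:
  fixes \<rho> :: real
  assumes "0 \<le> \<rho>" "\<rho> < 1"
  shows "(1 - \<rho>) * (\<Sum>n<M. real n * \<rho>^n) \<le> (\<Sum>n<M. \<rho>^n)"
proof (cases "M = 0")
  case False
  then have "(\<Sum>n<M. (real n - (if n = 0 then 0 else real (n - 1))) * \<rho>^n)
      = (1 - \<rho>) * (\<Sum>n<M. real n * \<rho>^n) + real (M - 1) * \<rho>^M"
    by (intro summation_by_parts_powers) simp
  moreover have "(\<Sum>n<M. (real n - (if n = 0 then 0 else real (n - 1))) * \<rho>^n) \<le> (\<Sum>n<M. \<rho>^n)"
    using assms by (intro sum_mono) auto
  moreover have "real (M - 1) * \<rho>^M \<ge> 0"
    using assms by simp
  ultimately show ?thesis by linarith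
qed simp

lemma one_minus_sq_mult_sum_n_power_le:
  fixes \<rho> :: real
  assumes "0 \<le> \<rho>" "\<rho> < 1"
  shows "(1 - \<rho>)^2 * (\<Sum>n<M. real n * \<rho>^n) \<le> 1"
proof -
  have "(1 - \<rho>)^2 * (\<Sum>n<M. real n * \<rho>^n) = (1 - \<rho>) * ((1 - \<rho>) * (\<Sum>n<M. real n * \<rho>^n))"
    by (simp add: power2_eq_square)
  also have "\<dots> \<le> (1 - \<rho>) * (\<Sum>n<M. \<rho>^n)"
    using assms one_minus_mult_sum_n_power_le[OF assms] by (intro mult_left_mono) auto
  also have "\<dots> \<le> 1"
    using one_minus_mult_sum_power_le[OF assms] .
  finally show ?thesis .
qed

lemma square_mult_power_tendsto_zero:
  fixes r :: real
  assumes "0 \<le> r" "r < 1"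
  shows "(\<lambda>M. real M^2 * r^M) \<longlonglongrightarrow> 0"
proof -
  have "(\<lambda>M. of_nat M * sqrt r ^ M) \<longlonglongrightarrow> (0::real)"
    using assms by (intro powser_times_n_limit_0) simp
  then have "(\<lambda>M. (of_nat M * sqrt r ^ M) * (of_nat M * sqrt r ^ M)) \<longlonglongrightarrow> (0::real)"
    using tendsto_mult by fastforce
  moreover have "(of_nat M * sqrt r ^ M) * (of_nat M * sqrt r ^ M) = real M^2 * r^M" for M
    using assms by (simp add: power2_eq_square mult_ac flip: power_mult_distrib)
  ultimately show ?thesis by simp
qed

lemma sqrt_of_nat_le: "sqrt (real n) \<le> real n"
proof (cases "n = 0")
  case False
  then have "sqrt (real n) * 1 \<le> sqrt (real n) * sqrt (real n)"
    by (intro mult_left_mono) auto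
  then show ?thesis by simp
qed simp

lemma truncation_term_tendsto_zero:
  fixes e :: "nat \<Rightarrow> real"
  assumes "0 \<le> r" "r < 1" "B \<ge> 0" "D \<ge> 0" and "\<And>n. \<bar>e n\<bar> \<le> B * sqrt (real n) + C"
  shows "(\<lambda>M. (\<bar>e (M - 1)\<bar> + D * real M^2) * r^M) \<longlonglongrightarrow> 0"
proof (rule tendsto_sandwich)
  have "\<bar>e (M - 1)\<bar> \<le> B * real M^2 + C" for M
  proof -
    have "sqrt (real (M - 1)) \<le> real M^2"
      using sqrt_of_nat_le[of "M - 1"] by (simp add: power2_eq_square)
        (metis diff_le_self le_square order_trans of_nat_le_iff of_nat_mult)
    then show ?thesis
      using assms(3) assms(5)[of "M - 1"] by (smt (verit) mult_left_mono)
  qed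
  then have "(\<bar>e (M - 1)\<bar> + D * real M^2) * r^M \<le> (B * real M^2 + C + D * real M^2) * r^M" for M
    using assms(1) by (intro mult_right_mono) auto
  then show "\<forall>\<^sub>F M in sequentially. (\<bar>e (M - 1)\<bar> + D * real M^2) * r^M \<le> (B + D) * (real M^2 * r^M) + C * r^M"
    by (intro always_eventually allI) (simp add: algebra_simps)
  show "\<forall>\<^sub>F M in sequentially. 0 \<le> (\<bar>e (M - 1)\<bar> + D * real M^2) * r^M"
    using assms(1,4) by simp
  show "(\<lambda>M. (B + D) * (real M^2 * r^M) + C * r^M) \<longlonglongrightarrow> 0"
    using tendsto_add[OF tendsto_mult_right_zero[OF square_mult_power_tendsto_zero[OF assms(1,2)]]
        tendsto_mult_right_zero[OF LIMSEQ_power_zero]] assms(1,2)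
    by (simp add: mult.commute)
qed (rule tendsto_const)

lemma scaled_sqrt_error_energy_le:
  fixes e :: "nat \<Rightarrow> real"
  assumes u: "0 < u" "u < 1" and \<epsilon>: "\<epsilon> \<ge> 0" and C: "C \<ge> 0"
    and e_bound: "\<And>n. \<bar>e n\<bar> \<le> \<epsilon> * sqrt (real n) + C"
  shows "u * sqrt (\<Sum>n<M. (e n)^2 * (1 - u)^n) \<le> 2 * \<epsilon> + 2 * C * sqrt u"
proof -
  have square_le: "(e n)^2 \<le> 2 * \<epsilon>^2 * real n + 2 * C^2" for n
  proof -
    have "(e n)^2 \<le> (\<epsilon> * sqrt (real n) + C)^2"
      using e_bound[of n] by (metis abs_ge_zero power2_abs power_mono)
    also have "\<dots> \<le> 2 * (\<epsilon> * sqrt (real n))^2 + 2 * C^2"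
      using sum_squares_bound[of "\<epsilon> * sqrt (real n)" C] by (simp add: power2_sum)
    finally show ?thesis
      by (simp add: power_mult_distrib)
  qed
  have "u^2 * (\<Sum>n<M. (e n)^2 * (1 - u)^n) \<le> u^2 * (\<Sum>n<M. (2 * \<epsilon>^2 * real n + 2 * C^2) * (1 - u)^n)"
    using u(2) by (intro mult_left_mono sum_mono mult_right_mono square_le) auto
  also have "\<dots> = 2 * \<epsilon>^2 * (u^2 * (\<Sum>n<M. real n * (1 - u)^n)) + 2 * C^2 * u * (u * (\<Sum>n<M. (1 - u)^n))"
    by (simp add: algebra_simps sum.distrib sum_distrib_left power2_eq_square)
  also have "\<dots> \<le> 2 * \<epsilon>^2 * 1 + 2 * C^2 * u * 1"
    using one_minus_sq_mult_sum_n_power_le[of "1 - u" M] one_minus_mult_sum_power_le[of "1 - u" M] u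
    by (intro add_mono mult_left_mono) auto
  also have "\<dots> \<le> (2 * \<epsilon>)^2 + (2 * C * sqrt u)^2 + 2 * (2 * \<epsilon>) * (2 * C * sqrt u)"
    using u(1) \<epsilon> C by (simp add: power_mult_distrib)
  also have "\<dots> = (2 * \<epsilon> + 2 * C * sqrt u)^2"
    by (rule power2_sum [symmetric])
  finally have "sqrt (u^2 * (\<Sum>n<M. (e n)^2 * (1 - u)^n)) \<le> 2 * \<epsilon> + 2 * C * sqrt u"
    using u(1) \<epsilon> C by (intro real_le_lsqrt) auto
  then show ?thesis
    using u(1) by (simp add: real_sqrt_mult)
qed

lemma scaled_abs_error_sum_le:
  fixes e :: "nat \<Rightarrow> real"
  assumes u: "0 < u" "u < 1" and \<epsilon>: "\<epsilon> \<ge> 0" and C: "C \<ge> 0"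
    and e_bound: "\<And>n. \<bar>e n\<bar> \<le> \<epsilon> * sqrt (real n) + C"
  shows "u^3 * (\<Sum>n<M. \<bar>e n\<bar> * (1 - u)^n) \<le> (\<epsilon> + C) * u"
proof -
  have e_linear: "\<bar>e n\<bar> \<le> \<epsilon> * real n + C" for n
    using e_bound[of n] mult_left_mono[OF sqrt_of_nat_le \<epsilon>, of n] by linarith
  have "u * (\<Sum>n<M. (1 - u)^n) \<ge> 0"
    using u by (intro mult_nonneg_nonneg sum_nonneg) auto
  have "u^2 * (\<Sum>n<M. \<bar>e n\<bar> * (1 - u)^n) \<le> u^2 * (\<Sum>n<M. (\<epsilon> * real n + C) * (1 - u)^n)"
    using u(2) by (intro mult_left_mono sum_mono mult_right_mono e_linear) auto
  also have "\<dots> = \<epsilon> * (u^2 * (\<Sum>n<M. real n * (1 - u)^n)) + C * u * (u * (\<Sum>n<M. (1 - u)^n))"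
    by (simp add: algebra_simps sum.distrib sum_distrib_left power2_eq_square)
  also have "\<dots> \<le> \<epsilon> * 1 + C * 1 * 1"
    using one_minus_sq_mult_sum_n_power_le[of "1 - u" M] one_minus_mult_sum_power_le[of "1 - u" M]
      \<open>u * (\<Sum>n<M. (1 - u)^n) \<ge> 0\<close> u \<epsilon> C
    by (intro add_mono mult_left_mono mult_mono) auto
  finally show ?thesis
    using u(1) mult_left_mono[of "u^2 * (\<Sum>n<M. \<bar>e n\<bar> * (1 - u)^n)" "\<epsilon> + C" u]
    by (simp add: power2_eq_square power3_eq_cube mult_ac)
qed

lemma scaled_indicator_poly_upper_bound:
  fixes A :: "nat set" and c1 c2 u \<epsilon> C :: real
  defines "e \<equiv> counting_error A c1 c2"
  assumes M: "M \<ge> 1" and u: "0 < u" "u < 1" and c2: "c2 \<ge> 0" and \<epsilon>: "\<epsilon> \<ge> 0" and C: "C \<ge> 0"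
    and e_bound: "\<And>n. \<bar>e n\<bar> \<le> \<epsilon> * sqrt (real n) + C"
  shows "u * (\<Sum>n<M. indicator A n * (1 - u)^n)
           \<le> 2 * c2 + 4 * \<epsilon> + (\<bar>c1 - 3 * c2\<bar> + \<bar>c1 - c2\<bar> + 4 * C) * sqrt u
             + (\<bar>e (M - 1)\<bar> + (1 + 2 * c2) * real M^2) * sqrt (1 - u) ^ M"
proof -
  define q where "q = (\<Sum>n<M. (1 - u)^n)"
  define B where "B = (\<bar>e (M - 1)\<bar> + (1 + 2 * c2) * real M^2) * sqrt (1 - u) ^ M"
  have "B \<ge> 0"
    using u(2) c2 by (simp add: B_def)
  have uq: "u * q \<le> 1"
    using one_minus_mult_sum_power_le[of "1 - u" M] u by (simp add: q_def)
  have "u * sqrt q = sqrt (u * (u * q))"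
    using u(1) by (simp add: real_sqrt_mult)
  also have "\<dots> \<le> sqrt u"
    using uq u(1) by (simp add: mult_left_le)
  finally have usq: "u * sqrt q \<le> sqrt u" .
  have u_le: "u \<le> sqrt u"
    using u by (simp add: real_le_rsqrt power2_eq_square mult_left_le)
  have "u * (\<Sum>n<M. indicator A n * (1 - u)^n)
      \<le> u * (2 * c2 * q + \<bar>c1 - 3 * c2\<bar> * sqrt q + \<bar>c1 - c2\<bar>
             + 2 * sqrt (\<Sum>n<M. (e n)^2 * (1 - u)^n) + B)"
    using indicator_poly_upper_bound[OF M, of "sqrt (1 - u)" c2 A c1] u c2
    unfolding q_def B_def e_def by (intro mult_left_mono) auto
  also have "\<dots> = 2 * c2 * (u * q) + \<bar>c1 - 3 * c2\<bar> * (u * sqrt q) + \<bar>c1 - c2\<bar> * u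
             + 2 * (u * sqrt (\<Sum>n<M. (e n)^2 * (1 - u)^n)) + u * B"
    by (simp add: algebra_simps)
  also have "\<dots> \<le> 2 * c2 * 1 + \<bar>c1 - 3 * c2\<bar> * sqrt u + \<bar>c1 - c2\<bar> * sqrt u
             + 2 * (2 * \<epsilon> + 2 * C * sqrt u) + 1 * B"
    using uq usq u_le \<open>B \<ge> 0\<close> u c2 scaled_sqrt_error_energy_le[OF u \<epsilon> C e_bound]
    by (intro add_mono mult_left_mono mult_right_mono) auto
  finally show ?thesis
    by (simp add: B_def algebra_simps)
qed

lemma scaled_indicator_poly_lower_bound:
  fixes A :: "nat set" and c1 c2 u \<epsilon> C :: real
  defines "e \<equiv> counting_error A c1 c2"
  assumes M: "M \<ge> 1" and u: "0 < u" "u < 1" and c2: "c2 \<ge> 0" and \<epsilon>: "\<epsilon> \<ge> 0" and C: "C \<ge> 0"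
    and e_bound: "\<And>n. \<bar>e n\<bar> \<le> \<epsilon> * sqrt (real n) + C"
  shows "2 * c2 * (1 - (1 - u)^M)^2 - (\<bar>c1 - 3 * c2\<bar> + \<bar>c1 - c2\<bar> + \<epsilon> + C) * u
           - (\<bar>e (M - 1)\<bar> + (1 + 2 * c2) * real M^2) * (1 - u)^M
         \<le> (u * (\<Sum>n<M. indicator A n * (1 - u)^n))^2"
proof -
  define q where "q = (\<Sum>n<M. (1 - u)^n)"
  define S where "S = (\<Sum>n<M. \<bar>e n\<bar> * (1 - u)^n)"
  define B where "B = (\<bar>e (M - 1)\<bar> + (1 + 2 * c2) * real M^2) * (1 - u)^M"
  have "B \<ge> 0"
    using u(2) c2 by (simp add: B_def)
  have uq: "u * q = 1 - (1 - u)^M"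
    using u(1) by (simp add: q_def sum_gp_strict)
  have uq_le: "u * q \<le> 1"
    using one_minus_mult_sum_power_le[of "1 - u" M] u by (simp add: q_def)
  have u2: "u^2 \<le> u"
    using u by (simp add: power2_eq_square mult_left_le)
  have "u^2 * (2 * c2 * q^2 - \<bar>c1 - 3 * c2\<bar> * q - \<bar>c1 - c2\<bar> - u * S - B)
      \<le> (u * (\<Sum>n<M. indicator A n * (1 - u)^n))^2"
    using indicator_poly_lower_bound[OF M, of "1 - u" c2 c1 A] u c2
    unfolding power_mult_distrib q_def S_def B_def e_def by (intro mult_left_mono) auto
  moreover have "u^2 * (2 * c2 * q^2 - \<bar>c1 - 3 * c2\<bar> * q - \<bar>c1 - c2\<bar> - u * S - B)
      = 2 * c2 * (u * q)^2 - \<bar>c1 - 3 * c2\<bar> * u * (u * q) - \<bar>c1 - c2\<bar> * u^2 - u^3 * S - u^2 * B"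
    by (simp add: algebra_simps power2_eq_square power3_eq_cube)
  moreover have "\<bar>c1 - 3 * c2\<bar> * u * (u * q) \<le> \<bar>c1 - 3 * c2\<bar> * u"
    using uq_le u(1) by (simp add: mult_left_le)
  moreover have "\<bar>c1 - c2\<bar> * u^2 \<le> \<bar>c1 - c2\<bar> * u"
    using u2 by (simp add: mult_left_mono)
  moreover have "u^2 * B \<le> B"
    using u2 u(2) \<open>B \<ge> 0\<close> by (simp add: mult_left_le_one_le)
  moreover have "u^3 * S \<le> (\<epsilon> + C) * u"
    unfolding S_def by (rule scaled_abs_error_sum_le[OF u \<epsilon> C e_bound])
  ultimately show ?thesis
    unfolding uq B_def[symmetric] by (simp add: algebra_simps)
qed

definition indicator_series :: "nat set \<Rightarrow> real \<Rightarrow> real" where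
  "indicator_series A \<rho> = (\<Sum>n. indicator A n * \<rho>^n)"

lemma summable_indicator_series:
  fixes \<rho> :: real
  assumes "0 \<le> \<rho>" "\<rho> < 1"
  shows "summable (\<lambda>n. indicator A n * \<rho>^n)"
  by (rule summable_comparison_test'[OF summable_geometric[of \<rho>]]) (use assms in \<open>auto simp: indicator_def\<close>)

lemma indicator_series_nonneg: "0 \<le> \<rho> \<Longrightarrow> \<rho> < 1 \<Longrightarrow> 0 \<le> indicator_series A \<rho>"
  unfolding indicator_series_def by (intro suminf_nonneg summable_indicator_series) auto

lemma tendsto_scaled_indicator_poly:
  fixes u :: real
  assumes "0 < u" "u < 1"
  shows "(\<lambda>M. u * (\<Sum>n<M. indicator A n * (1 - u)^n)) \<longlonglongrightarrow> u * indicator_series A (1 - u)"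
  unfolding indicator_series_def
  using assms by (intro tendsto_mult_left summable_LIMSEQ summable_indicator_series) auto

lemma indicator_series_upper_bound:
  fixes A :: "nat set" and c1 c2 u \<epsilon> C :: real
  defines "e \<equiv> counting_error A c1 c2"
  assumes u: "0 < u" "u < 1" and c2: "c2 \<ge> 0" and \<epsilon>: "\<epsilon> \<ge> 0" and C: "C \<ge> 0"
    and e_bound: "\<And>n. \<bar>e n\<bar> \<le> \<epsilon> * sqrt (real n) + C"
  shows "u * indicator_series A (1 - u) \<le> 2 * c2 + 4 * \<epsilon> + (\<bar>c1 - 3 * c2\<bar> + \<bar>c1 - c2\<bar> + 4 * C) * sqrt u"
proof (rule LIMSEQ_le)
  show "(\<lambda>M. u * (\<Sum>n<M. indicator A n * (1 - u)^n)) \<longlonglongrightarrow> u * indicator_series A (1 - u)"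
    using tendsto_scaled_indicator_poly[OF u] .
  show "(\<lambda>M. 2 * c2 + 4 * \<epsilon> + (\<bar>c1 - 3 * c2\<bar> + \<bar>c1 - c2\<bar> + 4 * C) * sqrt u
           + (\<bar>e (M - 1)\<bar> + (1 + 2 * c2) * real M^2) * sqrt (1 - u) ^ M)
        \<longlonglongrightarrow> 2 * c2 + 4 * \<epsilon> + (\<bar>c1 - 3 * c2\<bar> + \<bar>c1 - c2\<bar> + 4 * C) * sqrt u"
    using tendsto_add[OF tendsto_const truncation_term_tendsto_zero[of "sqrt (1 - u)" \<epsilon> "1 + 2 * c2" e C]]
      u c2 \<epsilon> e_bound by simp
  show "\<exists>N. \<forall>M\<ge>N. u * (\<Sum>n<M. indicator A n * (1 - u)^n)
           \<le> 2 * c2 + 4 * \<epsilon> + (\<bar>c1 - 3 * c2\<bar> + \<bar>c1 - c2\<bar> + 4 * C) * sqrt u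
             + (\<bar>e (M - 1)\<bar> + (1 + 2 * c2) * real M^2) * sqrt (1 - u) ^ M"
    using scaled_indicator_poly_upper_bound[OF _ u c2 \<epsilon> C] e_bound unfolding e_def by auto
qed

lemma indicator_series_lower_bound:
  fixes A :: "nat set" and c1 c2 u \<epsilon> C :: real
  defines "e \<equiv> counting_error A c1 c2"
  assumes u: "0 < u" "u < 1" and c2: "c2 \<ge> 0" and \<epsilon>: "\<epsilon> \<ge> 0" and C: "C \<ge> 0"
    and e_bound: "\<And>n. \<bar>e n\<bar> \<le> \<epsilon> * sqrt (real n) + C"
  shows "2 * c2 - (\<bar>c1 - 3 * c2\<bar> + \<bar>c1 - c2\<bar> + \<epsilon> + C) * u \<le> (u * indicator_series A (1 - u))^2"
proof (rule LIMSEQ_le)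
  have "(\<lambda>M. 2 * c2 * (1 - (1 - u)^M)^2 - (\<bar>c1 - 3 * c2\<bar> + \<bar>c1 - c2\<bar> + \<epsilon> + C) * u)
      \<longlonglongrightarrow> 2 * c2 * (1 - 0)^2 - (\<bar>c1 - 3 * c2\<bar> + \<bar>c1 - c2\<bar> + \<epsilon> + C) * u"
    using u by (intro tendsto_intros LIMSEQ_power_zero) auto
  then show "(\<lambda>M. 2 * c2 * (1 - (1 - u)^M)^2 - (\<bar>c1 - 3 * c2\<bar> + \<bar>c1 - c2\<bar> + \<epsilon> + C) * u
           - (\<bar>e (M - 1)\<bar> + (1 + 2 * c2) * real M^2) * (1 - u)^M)
        \<longlonglongrightarrow> 2 * c2 - (\<bar>c1 - 3 * c2\<bar> + \<bar>c1 - c2\<bar> + \<epsilon> + C) * u"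
    using tendsto_diff[OF _ truncation_term_tendsto_zero[of "1 - u" \<epsilon> "1 + 2 * c2" e C]] u c2 \<epsilon> e_bound
    by simp
  show "(\<lambda>M. (u * (\<Sum>n<M. indicator A n * (1 - u)^n))^2) \<longlonglongrightarrow> (u * indicator_series A (1 - u))^2"
    using tendsto_power[OF tendsto_scaled_indicator_poly[OF u]] .
  show "\<exists>N. \<forall>M\<ge>N. 2 * c2 * (1 - (1 - u)^M)^2 - (\<bar>c1 - 3 * c2\<bar> + \<bar>c1 - c2\<bar> + \<epsilon> + C) * u
           - (\<bar>e (M - 1)\<bar> + (1 + 2 * c2) * real M^2) * (1 - u)^M
         \<le> (u * (\<Sum>n<M. indicator A n * (1 - u)^n))^2"
    using scaled_indicator_poly_lower_bound[OF _ u c2 \<epsilon> C] e_bound unfolding e_def by auto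
qed

lemma smallo_sqrt_imp_uniform_bound:
  fixes f :: "nat \<Rightarrow> real"
  assumes "f \<in> o(\<lambda>N. sqrt (real N))" and "\<epsilon> > 0"
  obtains C where "C \<ge> 0" and "\<And>n. \<bar>f n\<bar> \<le> \<epsilon> * sqrt (real n) + C"
proof -
  have "eventually (\<lambda>n. norm (f n) \<le> \<epsilon> * norm (sqrt (real n))) at_top"
    by (rule landau_o.smallD[OF assms])
  then obtain N where N: "\<And>n. n \<ge> N \<Longrightarrow> \<bar>f n\<bar> \<le> \<epsilon> * sqrt (real n)"
    by (auto simp: eventually_at_top_linorder)
  define C where "C = (\<Sum>n<N. \<bar>f n\<bar>)"
  have "\<bar>f n\<bar> \<le> \<epsilon> * sqrt (real n) + C" for n
  proof (cases "n < N")
    case True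
    then have "\<bar>f n\<bar> \<le> C"
      unfolding C_def by (intro member_le_sum) auto
    then show ?thesis
      using assms(2) by (simp add: add_increasing)
  next
    case False
    then show ?thesis
      using N[of n] by (simp add: C_def sum_nonneg add_increasing2)
  qed
  moreover have "C \<ge> 0"
    unfolding C_def by (intro sum_nonneg) simp
  ultimately show ?thesis
    using that by blast
qed

lemma eventually_indicator_series_bounds:
  fixes A :: "nat set" and c1 c2 \<epsilon> :: real
  assumes "c2 \<ge> 0" and "counting_error A c1 c2 \<in> o(\<lambda>N. sqrt (real N))" and "\<epsilon> > 0"
  shows "\<forall>\<^sub>F u in at_right 0. 0 \<le> u * indicator_series A (1 - u)
           \<and> u * indicator_series A (1 - u) \<le> 2 * c2 + 5 * \<epsilon>
           \<and> 2 * c2 - \<epsilon> \<le> (u * indicator_series A (1 - u))^2"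
proof -
  obtain C where C: "C \<ge> 0" and e_bound: "\<And>n. \<bar>counting_error A c1 c2 n\<bar> \<le> \<epsilon> * sqrt (real n) + C"
    using smallo_sqrt_imp_uniform_bound[OF assms(2,3)] by blast
  define K where "K = \<bar>c1 - 3 * c2\<bar> + \<bar>c1 - c2\<bar> + 4 * C"
  define K' where "K' = \<bar>c1 - 3 * c2\<bar> + \<bar>c1 - c2\<bar> + \<epsilon> + C"
  have "((\<lambda>u. K * sqrt u) \<longlongrightarrow> 0) (at_right 0)" "((\<lambda>u. K' * u) \<longlongrightarrow> 0) (at_right 0)"
    by (auto intro!: tendsto_eq_intros)
  then have "\<forall>\<^sub>F u in at_right 0. K * sqrt u < \<epsilon>" "\<forall>\<^sub>F u in at_right 0. K' * u < \<epsilon>"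
    using assms(3) by (auto dest: order_tendstoD(2))
  moreover have "\<forall>\<^sub>F u in at_right 0. u \<in> {0<..<1::real}"
    by (rule eventually_at_right_real) simp
  ultimately show ?thesis
  proof eventually_elim
    case (elim u)
    then have u: "0 < u" "u < 1"
      by auto
    show ?case
      using indicator_series_nonneg[of "1 - u" A] indicator_series_upper_bound[OF u assms(1) _ C e_bound]
        indicator_series_lower_bound[OF u assms(1) _ C e_bound] u assms(3) elim(1,2)
      by (auto simp: K_def K'_def)
  qed
qed

lemma square_lt_of_le_add_gap:
  fixes a y :: real
  assumes "0 < a" "a < 1" "0 \<le> y" "y \<le> a + 5 * ((a - a^2) / 16)"
  shows "y^2 < a - (a - a^2) / 16"
proof -
  define g where "g = (a - a^2) / 16"
  have "a - a^2 = a * (1 - a)"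
    by (simp add: power2_eq_square algebra_simps)
  moreover have "0 < a * (1 - a)"
    using assms(1,2) by simp
  moreover have "a * (1 - a) \<le> 1/4"
    using zero_le_power2[of "a - 1/2"] by (simp add: power2_eq_square algebra_simps)
  ultimately have g: "0 < g" "g \<le> 1/64"
    by (simp_all add: g_def)
  have "y^2 \<le> (a + 5 * g)^2"
    using assms(3,4) by (simp add: g_def power_mono)
  also have "\<dots> = a^2 + 10 * a * g + 25 * g * g"
    by (simp add: power2_eq_square algebra_simps)
  also have "\<dots> \<le> a^2 + 10 * g + g"
    using g assms(2) by (intro add_mono) (auto intro: mult_right_mono)
  also have "\<dots> < a - g"
    using g(1) by (simp add: g_def field_simps)
  finally show ?thesis
    by (simp add: g_def)
qed

theorem theorem4:
  fixes c1 c2 :: real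
  assumes "0 < c2" and "c2 < 1/2"
  shows "\<not> (\<exists>A :: nat set.
           (\<lambda>N::nat. real (\<Sum>n\<le>N. rep_count A n) - (c2 * real N ^ 2 + c1 * real N))
             \<in> o(\<lambda>N. sqrt (real N)))"
proof
  assume "\<exists>A :: nat set. (\<lambda>N::nat. real (\<Sum>n\<le>N. rep_count A n) - (c2 * real N ^ 2 + c1 * real N))
             \<in> o(\<lambda>N. sqrt (real N))"
  then obtain A where A: "counting_error A c1 c2 \<in> o(\<lambda>N. sqrt (real N))"
    by (auto simp: counting_error_def [abs_def])
  define a where "a = 2 * c2"
  have a: "0 < a" "a < 1"
    using assms by (simp_all add: a_def)
  then have "(a - a^2) / 16 > 0"
    by (simp add: power2_eq_square)
  from eventually_happens'[OF trivial_limit_at_right_real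
      eventually_indicator_series_bounds[OF _ A this]] assms(1)
  obtain y where "0 \<le> y" "y \<le> a + 5 * ((a - a^2) / 16)" "a - (a - a^2) / 16 \<le> y^2"
    by (auto simp: a_def)
  with square_lt_of_le_add_gap[OF a] show False
    by fastforce
qed

end
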